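(* Let $\mathcal{T}=\{0,1\}$, let $P\in\Delta_{\mathcal{T},\mathcal{X},\mathcal{Y}}$ with $P(T=0)>0$, $P(T=1)>0$, and suppose $Q^*\in\arg\max_{Q\in\Delta_P}H_Q(T\mid X,Y)$ lies in the relative interior of $\Delta_P$. If $\mathcal{X}_0=\mathcal{X}_1$ and $\mathcal{Y}_0\ne\mathcal{Y}_1$, then $T$ is conditionally independent of $X$ given $Y$ under $Q^*$. If $\mathcal{Y}_0=\mathcal{Y}_1$ and $\mathcal{X}_0\neq\mathcal{X}_1$, then $T$ is conditionally independent of $Y$ given $X$ under $Q^*$.
   Context: $T,X,Y$ are random variables with finite state spaces $\mathcal{T},\mathcal{X},\mathcal{Y}$; $\Delta_{\mathcal{T},\mathcal{X},\mathcal{Y}}$ is the set of all joint distributions on $\mathcal{T}\times\mathcal{X}\times\mathcal{Y}$. For $P\in\Delta_{\mathcal{T},\mathcal{X},\mathcal{Y}}$, $\Delta_P=\{Q\in\Delta_{\mathcal{T},\mathcal{X},\mathcal{Y}}: Q(X=x,T=t)=P(X=x,T=t),\ Q(Y=y,T=t)=P(Y=y,T=t)\ \forall x,y,t\}$. For $t\in\{0,1\}$: $\mathcal{X}_t=\{x: P(X=x\mid T=t)>0\}$, $\mathcal{Y}_t=\{y: P(Y=y\mid T=t)>0\}$. *)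

theory Defs
  imports "HOL-Analysis.Analysis"
begin

text \<open>A joint distribution of (T,X,Y) with T ranging over {0,1} (encoded as bool,
  False = 0, True = 1) and X, Y over finite types, viewed as a vector in the
  Euclidean space indexed by the finite set bool \<times> 'x \<times> 'y.\<close>

type_synonym ('x, 'y) jdist = "real ^ (bool \<times> 'x \<times> 'y)"

definition is_dist :: "('x::finite, 'y::finite) jdist \<Rightarrow> bool" where
  "is_dist Q \<longleftrightarrow> (\<forall>i. 0 \<le> Q $ i) \<and> (\<Sum>i\<in>UNIV. Q $ i) = 1"

definition pT :: "('x::finite, 'y::finite) jdist \<Rightarrow> bool \<Rightarrow> real" where
  "pT Q t = (\<Sum>x\<in>UNIV. \<Sum>y\<in>UNIV. Q $ (t, x, y))"

definition pX :: "('x::finite, 'y::finite) jdist \<Rightarrow> 'x \<Rightarrow> real" where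
  "pX Q x = (\<Sum>t\<in>UNIV. \<Sum>y\<in>UNIV. Q $ (t, x, y))"

definition pY :: "('x::finite, 'y::finite) jdist \<Rightarrow> 'y \<Rightarrow> real" where
  "pY Q y = (\<Sum>t\<in>UNIV. \<Sum>x\<in>UNIV. Q $ (t, x, y))"

definition pXT :: "('x::finite, 'y::finite) jdist \<Rightarrow> 'x \<Rightarrow> bool \<Rightarrow> real" where
  "pXT Q x t = (\<Sum>y\<in>UNIV. Q $ (t, x, y))"

definition pYT :: "('x::finite, 'y::finite) jdist \<Rightarrow> 'y \<Rightarrow> bool \<Rightarrow> real" where
  "pYT Q y t = (\<Sum>x\<in>UNIV. Q $ (t, x, y))"

definition pXY :: "('x::finite, 'y::finite) jdist \<Rightarrow> 'x \<Rightarrow> 'y \<Rightarrow> real" where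
  "pXY Q x y = (\<Sum>t\<in>UNIV. Q $ (t, x, y))"

definition Delta_P :: "('x::finite, 'y::finite) jdist \<Rightarrow> ('x, 'y) jdist set" where
  "Delta_P P = {Q. is_dist Q \<and> (\<forall>x t. pXT Q x t = pXT P x t) \<and> (\<forall>y t. pYT Q y t = pYT P y t)}"

definition cond_entropy_T_XY :: "('x::finite, 'y::finite) jdist \<Rightarrow> real" where
  "cond_entropy_T_XY Q =
     - (\<Sum>(t, x, y)\<in>UNIV. if Q $ (t, x, y) = 0 then 0
          else Q $ (t, x, y) * log 2 (Q $ (t, x, y) / pXY Q x y))"

definition supp_X :: "('x::finite, 'y::finite) jdist \<Rightarrow> bool \<Rightarrow> 'x set" where
  "supp_X P t = {x. pXT P x t / pT P t > 0}"

definition supp_Y :: "('x::finite, 'y::finite) jdist \<Rightarrow> bool \<Rightarrow> 'y set" where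
  "supp_Y P t = {y. pYT P y t / pT P t > 0}"

definition indep_T_X_given_Y :: "('x::finite, 'y::finite) jdist \<Rightarrow> bool" where
  "indep_T_X_given_Y Q \<longleftrightarrow>
     (\<forall>t x y. Q $ (t, x, y) * pY Q y = pYT Q y t * pXY Q x y)"

definition indep_T_Y_given_X :: "('x::finite, 'y::finite) jdist \<Rightarrow> bool" where
  "indep_T_Y_given_X Q \<longleftrightarrow>
     (\<forall>t x y. Q $ (t, x, y) * pX Q x = pXT Q x t * pXY Q x y)"

end

theory Submission
  imports Defs
begin

text \<open>
  \<open>H\<^sub>Q(T | X, Y)\<close> is a sum over the cells \<open>(x, y)\<close> of the binary entropy of the masses
  \<open>Q(0, x, y)\<close> and \<open>Q(1, x, y)\<close>. As \<open>\<Y>\<^sub>0 \<noteq> \<Y>\<^sub>1\<close>, some value \<open>y'\<close> occurs together with only one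
  value \<open>t\<close> of \<open>T\<close>, so the cells \<open>(x, y')\<close> contribute nothing. Shifting mass \<open>\<epsilon>\<close> inside the slice
  \<open>T = t\<close> around a rectangle \<open>{x, x'} \<times> {y, y'}\<close> preserves the \<open>(X, T)\<close> and \<open>(Y, T)\<close> marginals
  and changes the entropy only in the cells \<open>(x, y)\<close> and \<open>(x', y)\<close>. A maximizer in the relative
  interior charges every cell allowed by the marginals, hence is stationary under these moves,
  which forces \<open>Q(t | x, y) = Q(t | x', y)\<close> for all \<open>x, x'\<close> in \<open>\<X>\<^sub>0 = \<X>\<^sub>1\<close>: this is conditional
  independence of \<open>T\<close> and \<open>X\<close> given \<open>Y\<close>. Exchanging \<open>X\<close> and \<open>Y\<close> gives the second claim.
\<close>

lemma sum_UNIV_bool: "(\<Sum>t\<in>UNIV. f t) = f s + f (\<not> s)"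
  by (cases s) (simp_all add: UNIV_bool add.commute)

lemma sum_UNIV_triple:
  "(\<Sum>i\<in>UNIV. f i) = (\<Sum>t\<in>UNIV. \<Sum>x\<in>UNIV. \<Sum>y\<in>UNIV. f (t, x, y))"
  by (simp add: UNIV_Times_UNIV[symmetric] sum.cartesian_product del: UNIV_Times_UNIV)

lemma pXY_split: "pXY Q x y = Q $ (t, x, y) + Q $ (\<not> t, x, y)"
  unfolding pXY_def by (rule sum_UNIV_bool)

lemma pY_split: "pY Q y = pYT Q y t + pYT Q y (\<not> t)"
  unfolding pY_def pYT_def by (rule sum_UNIV_bool)

lemma pY_eq_sum_pXY: "pY Q y = (\<Sum>x\<in>UNIV. pXY Q x y)"
  unfolding pY_def pXY_def by (rule sum.swap)

lemma sum_pXT: "(\<Sum>x\<in>UNIV. pXT Q x t) = pT Q t"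
  unfolding pXT_def pT_def ..

lemma sum_pYT: "(\<Sum>y\<in>UNIV. pYT Q y t) = pT Q t"
  unfolding pYT_def pT_def by (rule sum.swap)

lemma sum_eq_sum_pXT: "(\<Sum>i\<in>UNIV. Q $ i) = (\<Sum>t\<in>UNIV. \<Sum>x\<in>UNIV. pXT Q x t)"
  unfolding pXT_def by (rule sum_UNIV_triple)

lemma is_dist_nonneg: "is_dist Q \<Longrightarrow> 0 \<le> Q $ i"
  unfolding is_dist_def by blast

lemma pXT_nonneg: "is_dist Q \<Longrightarrow> 0 \<le> pXT Q x t"
  unfolding pXT_def by (simp add: sum_nonneg is_dist_nonneg)

lemma pYT_nonneg: "is_dist Q \<Longrightarrow> 0 \<le> pYT Q y t"
  unfolding pYT_def by (simp add: sum_nonneg is_dist_nonneg)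

lemma mem_Delta_P_iff:
  assumes "is_dist P"
  shows "Q \<in> Delta_P P \<longleftrightarrow>
    (\<forall>i. 0 \<le> Q $ i) \<and> (\<forall>x t. pXT Q x t = pXT P x t) \<and> (\<forall>y t. pYT Q y t = pYT P y t)"
  using assms unfolding Delta_P_def is_dist_def by (auto simp: sum_eq_sum_pXT)

lemma Delta_P_zero_if_pXT_zero:
  assumes "Q \<in> Delta_P P" "pXT P x t = 0"
  shows "Q $ (t, x, y) = 0"
proof -
  have "(\<Sum>y\<in>UNIV. Q $ (t, x, y)) = 0" and "is_dist Q"
    using assms unfolding Delta_P_def pXT_def by auto
  then show ?thesis by (simp add: sum_nonneg_eq_0_iff is_dist_nonneg)
qed

lemma Delta_P_zero_if_pYT_zero:
  assumes "Q \<in> Delta_P P" "pYT P y t = 0"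
  shows "Q $ (t, x, y) = 0"
proof -
  have "(\<Sum>x\<in>UNIV. Q $ (t, x, y)) = 0" and "is_dist Q"
    using assms unfolding Delta_P_def pYT_def by auto
  then show ?thesis by (simp add: sum_nonneg_eq_0_iff is_dist_nonneg)
qed

definition indep_coupling :: "('x::finite, 'y::finite) jdist \<Rightarrow> ('x, 'y) jdist" where
  "indep_coupling P = vec_lambda (\<lambda>(t, x, y). pXT P x t * pYT P y t / pT P t)"

lemma indep_coupling_in_Delta_P:
  assumes P: "is_dist P" and pos: "\<And>t. pT P t > 0"
  shows "indep_coupling P \<in> Delta_P P"
  unfolding mem_Delta_P_iff[OF P]
proof (intro conjI allI)
  fix i
  show "0 \<le> indep_coupling P $ i"
    using P pos[of "fst i"] by (cases i) (simp add: indep_coupling_def pXT_nonneg pYT_nonneg)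
next
  fix x t
  have "pXT (indep_coupling P) x t = pXT P x t * (\<Sum>y\<in>UNIV. pYT P y t) / pT P t"
    by (simp add: indep_coupling_def pXT_def sum_distrib_left sum_divide_distrib)
  then show "pXT (indep_coupling P) x t = pXT P x t"
    using pos[of t] by (simp add: sum_pYT)
next
  fix y t
  have "pYT (indep_coupling P) y t = (\<Sum>x\<in>UNIV. pXT P x t) * pYT P y t / pT P t"
    by (simp add: indep_coupling_def pYT_def sum_distrib_right sum_divide_distrib)
  then show "pYT (indep_coupling P) y t = pYT P y t"
    using pos[of t] by (simp add: sum_pXT)
qed

lemma rel_interior_extend:
  fixes S :: "'a::real_normed_vector set"
  assumes "z \<in> rel_interior S" "x \<in> S"
  obtains \<delta> where "\<delta> > 0" "z + \<delta> *\<^sub>R (z - x) \<in> S"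
proof -
  obtain e where e: "e > 0" "ball z e \<inter> affine hull S \<subseteq> S" and "z \<in> S"
    using assms(1) unfolding mem_rel_interior_ball by blast
  define n where "n = norm (z - x)"
  define \<delta> where "\<delta> = e / (2 * (n + 1))"
  have "0 \<le> n"
    by (simp add: n_def)
  with e(1) have "\<delta> > 0"
    by (simp add: \<delta>_def)
  have "e * n < e * (2 * (n + 1))"
    using e(1) \<open>0 \<le> n\<close> by (intro mult_strict_left_mono) auto
  then have "\<delta> * n < e"
    using e(1) \<open>0 \<le> n\<close> by (simp add: \<delta>_def divide_less_eq)
  then have "z + \<delta> *\<^sub>R (z - x) \<in> ball z e"
    using \<open>\<delta> > 0\<close> by (simp add: dist_norm n_def)
  moreover have "z + \<delta> *\<^sub>R (z - x) \<in> affine hull S"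
  proof -
    have "(1 + \<delta>) *\<^sub>R z + (- \<delta>) *\<^sub>R x \<in> affine hull S"
      by (rule mem_affine[OF affine_affine_hull]) (use \<open>z \<in> S\<close> assms(2) hull_inc in auto)
    moreover have "(1 + \<delta>) *\<^sub>R z + (- \<delta>) *\<^sub>R x = z + \<delta> *\<^sub>R (z - x)"
      by (simp add: algebra_simps)
    ultimately show ?thesis
      by simp
  qed
  ultimately show ?thesis
    using that \<open>\<delta> > 0\<close> e(2) by blast
qed

lemma rel_interior_Delta_P_pos:
  assumes P: "is_dist P" and pos: "\<And>t. pT P t > 0"
    and Q: "Q \<in> rel_interior (Delta_P P)"
    and "pXT P x t > 0" "pYT P y t > 0"
  shows "Q $ (t, x, y) > 0"
proof -
  define R where "R = indep_coupling P"
  have "R $ (t, x, y) > 0"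
    using assms(4,5) pos[of t] by (simp add: R_def indep_coupling_def)
  obtain \<delta> where "\<delta> > 0" and "Q + \<delta> *\<^sub>R (Q - R) \<in> Delta_P P"
    using rel_interior_extend[OF Q] indep_coupling_in_Delta_P[OF P pos] R_def by blast
  then have "0 \<le> (1 + \<delta>) * Q $ (t, x, y) - \<delta> * R $ (t, x, y)"
    unfolding mem_Delta_P_iff[OF P] by (auto simp: algebra_simps)
  then have "(1 + \<delta>) * Q $ (t, x, y) > 0"
    using mult_pos_pos[OF \<open>\<delta> > 0\<close> \<open>R $ (t, x, y) > 0\<close>] by linarith
  with \<open>\<delta> > 0\<close> show ?thesis
    by (simp add: zero_less_mult_iff)
qed

text \<open>No case split for \<open>0 log 0 = 0\<close> is needed: a vanishing mass kills its term as \<open>0 * _ = 0\<close>.\<close>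

definition cell_entropy :: "real \<Rightarrow> real \<Rightarrow> real" where
  "cell_entropy a b = - (a * log 2 (a / (a + b)) + b * log 2 (b / (a + b)))"

lemma cell_entropy_zero_right [simp]: "cell_entropy a 0 = 0"
  by (simp add: cell_entropy_def)

lemma cond_entropy_eq_sum_cell_entropy:
  "cond_entropy_T_XY Q = (\<Sum>x\<in>UNIV. \<Sum>y\<in>UNIV. cell_entropy (Q $ (t, x, y)) (Q $ (\<not> t, x, y)))"
proof -
  have "cond_entropy_T_XY Q =
      - (\<Sum>s\<in>UNIV. \<Sum>x\<in>UNIV. \<Sum>y\<in>UNIV. Q $ (s, x, y) * log 2 (Q $ (s, x, y) / pXY Q x y))"
    unfolding cond_entropy_T_XY_def by (subst sum_UNIV_triple) (auto intro!: sum.cong)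
  also have "\<dots> = (\<Sum>x\<in>UNIV. \<Sum>y\<in>UNIV. cell_entropy (Q $ (t, x, y)) (Q $ (\<not> t, x, y)))"
    unfolding sum_UNIV_bool[where s = t] pXY_split[of _ _ _ t] cell_entropy_def
    by (simp add: sum.distrib sum_negf sum_subtractf)
  finally show ?thesis .
qed

lemma cell_entropy_deriv:
  assumes "a > 0" "b > 0"
  shows "((\<lambda>a. cell_entropy a b) has_real_derivative - log 2 (a / (a + b))) (at a)"
  unfolding cell_entropy_def using assms
  by (auto intro!: derivative_eq_intros simp: log_def divide_simps)

lemma cell_entropy_transfer_deriv:
  assumes "a > 0" "b > 0" "a' > 0" "b' > 0"
  shows "((\<lambda>\<epsilon>. cell_entropy (a - \<epsilon>) b + cell_entropy (a' + \<epsilon>) b') has_real_derivative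
           log 2 (a / (a + b)) - log 2 (a' / (a' + b'))) (at 0)"
proof -
  have "((\<lambda>\<epsilon>. cell_entropy (a - \<epsilon>) b) has_real_derivative - log 2 (a / (a + b)) * - 1) (at 0)"
    using cell_entropy_deriv[of a b] assms
    by (intro DERIV_chain2[where g = "\<lambda>\<epsilon>. a - \<epsilon>"]) (auto intro!: derivative_eq_intros)
  moreover have "((\<lambda>\<epsilon>. cell_entropy (a' + \<epsilon>) b') has_real_derivative - log 2 (a' / (a' + b')) * 1) (at 0)"
    using cell_entropy_deriv[of a' b'] assms
    by (intro DERIV_chain2[where g = "\<lambda>\<epsilon>. a' + \<epsilon>"]) (auto intro!: derivative_eq_intros)
  ultimately show ?thesis
    by (auto intro: derivative_eq_intros)
qed

text \<open>Shifts unit mass within the slice \<open>T = t\<close> from \<open>(x, y)\<close> to \<open>(x', y)\<close> and from \<open>(x', y')\<close>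
  to \<open>(x, y')\<close>; the product form makes all \<open>(X, T)\<close> and \<open>(Y, T)\<close> marginals vanish.\<close>

definition rect_move :: "bool \<Rightarrow> 'x \<Rightarrow> 'x \<Rightarrow> 'y \<Rightarrow> 'y \<Rightarrow> ('x::finite, 'y::finite) jdist" where
  "rect_move t x x' y y' = vec_lambda (\<lambda>(s, u, v).
     of_bool (s = t) * (of_bool (u = x') - of_bool (u = x)) * (of_bool (v = y) - of_bool (v = y')))"

lemma pXT_rect_move: "pXT (rect_move t x x' y y') u s = 0"
  unfolding pXT_def rect_move_def by (simp add: sum_subtractf flip: sum_distrib_left)

lemma pYT_rect_move: "pYT (rect_move t x x' y y') v s = 0"
  unfolding pYT_def rect_move_def by (simp add: sum_subtractf flip: sum_distrib_left sum_distrib_right)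

lemma pXT_add_scaleR: "pXT (Q + c *\<^sub>R D) x t = pXT Q x t + c * pXT D x t"
  unfolding pXT_def by (simp add: sum.distrib sum_distrib_left)

lemma pYT_add_scaleR: "pYT (Q + c *\<^sub>R D) y t = pYT Q y t + c * pYT D y t"
  unfolding pYT_def by (simp add: sum.distrib sum_distrib_left)

lemma rect_move_in_Delta_P:
  assumes Q: "Q \<in> Delta_P P"
    and "\<bar>\<epsilon>\<bar> \<le> Q $ (t, x, y)" "\<bar>\<epsilon>\<bar> \<le> Q $ (t, x', y)"
    and "\<bar>\<epsilon>\<bar> \<le> Q $ (t, x, y')" "\<bar>\<epsilon>\<bar> \<le> Q $ (t, x', y')"
  shows "Q + \<epsilon> *\<^sub>R rect_move t x x' y y' \<in> Delta_P P"
proof -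
  let ?Q' = "Q + \<epsilon> *\<^sub>R rect_move t x x' y y'"
  have "is_dist Q" and mX: "\<And>u s. pXT Q u s = pXT P u s" and mY: "\<And>v s. pYT Q v s = pYT P v s"
    using Q unfolding Delta_P_def by auto
  have "0 \<le> ?Q' $ (s, u, v)" for s u v
    using assms(2-5) is_dist_nonneg[OF \<open>is_dist Q\<close>, of "(s, u, v)"]
    by (auto simp: rect_move_def)
  moreover have "(\<Sum>i\<in>UNIV. ?Q' $ i) = (\<Sum>i\<in>UNIV. Q $ i)"
    by (simp only: sum_eq_sum_pXT pXT_add_scaleR pXT_rect_move) simp
  ultimately show ?thesis
    using \<open>is_dist Q\<close> unfolding Delta_P_def is_dist_def
    by (auto simp: pXT_add_scaleR pYT_add_scaleR pXT_rect_move pYT_rect_move mX mY)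
qed

lemma cond_entropy_add_rect_move:
  assumes "x \<noteq> x'" "y \<noteq> y'" "Q $ (\<not> t, x, y') = 0" "Q $ (\<not> t, x', y') = 0"
  shows "cond_entropy_T_XY (Q + \<epsilon> *\<^sub>R rect_move t x x' y y') = cond_entropy_T_XY Q
    + (cell_entropy (Q $ (t, x, y) - \<epsilon>) (Q $ (\<not> t, x, y)) - cell_entropy (Q $ (t, x, y)) (Q $ (\<not> t, x, y)))
    + (cell_entropy (Q $ (t, x', y) + \<epsilon>) (Q $ (\<not> t, x', y)) - cell_entropy (Q $ (t, x', y)) (Q $ (\<not> t, x', y)))"
    (is "_ = _ + ?A + ?B")
proof -
  let ?Q' = "Q + \<epsilon> *\<^sub>R rect_move t x x' y y'"
  \<comment> \<open>The cells in column \<open>y'\<close> carry no mass at \<open>\<not> t\<close>, so their entropy is \<open>0\<close> before and after.\<close>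
  have cell: "cell_entropy (?Q' $ (t, u, v)) (?Q' $ (\<not> t, u, v)) - cell_entropy (Q $ (t, u, v)) (Q $ (\<not> t, u, v))
      = (if v = y then (if u = x then ?A else 0) + (if u = x' then ?B else 0) else 0)" for u v
    using assms by (auto simp: rect_move_def)
  have "cond_entropy_T_XY ?Q' - cond_entropy_T_XY Q
      = (\<Sum>u\<in>UNIV. \<Sum>v\<in>UNIV. if v = y then (if u = x then ?A else 0) + (if u = x' then ?B else 0) else 0)"
    unfolding cond_entropy_eq_sum_cell_entropy[where t = t] by (simp only: cell flip: sum_subtractf)
  also have "\<dots> = ?A + ?B"
    by (simp add: sum.distrib)
  finally show ?thesis
    by simp
qed

lemma maximizer_cond_prob_eq:
  assumes Q: "Q \<in> Delta_P P"
    and max: "\<forall>Q'\<in>Delta_P P. cond_entropy_T_XY Q' \<le> cond_entropy_T_XY Q"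
    and pos: "Q $ (t, x, y) > 0" "Q $ (t, x', y) > 0" "Q $ (\<not> t, x, y) > 0" "Q $ (\<not> t, x', y) > 0"
      "Q $ (t, x, y') > 0" "Q $ (t, x', y') > 0"
    and zero: "Q $ (\<not> t, x, y') = 0" "Q $ (\<not> t, x', y') = 0"
  shows "Q $ (t, x, y) * pXY Q x' y = Q $ (t, x', y) * pXY Q x y"
proof (cases "x = x'")
  case False
  have "y \<noteq> y'"
    using pos(3) zero(1) by auto
  define a where "a = Q $ (t, x, y)"
  define b where "b = Q $ (\<not> t, x, y)"
  define a' where "a' = Q $ (t, x', y)"
  define b' where "b' = Q $ (\<not> t, x', y)"
  define \<phi> where "\<phi> \<epsilon> = cell_entropy (a - \<epsilon>) b + cell_entropy (a' + \<epsilon>) b'" for \<epsilon>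
  define m where "m = Min {a, a', Q $ (t, x, y'), Q $ (t, x', y')}"
  have "m > 0"
    using pos by (simp add: m_def a_def a'_def)
  have "\<phi> \<epsilon> \<le> \<phi> 0" if "\<bar>0 - \<epsilon>\<bar> < m" for \<epsilon>
  proof -
    have "\<bar>\<epsilon>\<bar> \<le> a" "\<bar>\<epsilon>\<bar> \<le> a'" "\<bar>\<epsilon>\<bar> \<le> Q $ (t, x, y')" "\<bar>\<epsilon>\<bar> \<le> Q $ (t, x', y')"
      using that by (auto simp: m_def)
    then have "Q + \<epsilon> *\<^sub>R rect_move t x x' y y' \<in> Delta_P P"
      by (intro rect_move_in_Delta_P[OF Q]) (simp_all add: a_def a'_def)
    with max have "cond_entropy_T_XY (Q + \<epsilon> *\<^sub>R rect_move t x x' y y') \<le> cond_entropy_T_XY Q"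
      by blast
    then show ?thesis
      using cond_entropy_add_rect_move[OF False \<open>y \<noteq> y'\<close> zero, of \<epsilon>]
      by (simp add: \<phi>_def a_def b_def a'_def b'_def)
  qed
  moreover have "(\<phi> has_real_derivative log 2 (a / (a + b)) - log 2 (a' / (a' + b'))) (at 0)"
    unfolding \<phi>_def using pos by (intro cell_entropy_transfer_deriv) (simp_all add: a_def b_def a'_def b'_def)
  ultimately have "log 2 (a / (a + b)) - log 2 (a' / (a' + b')) = 0"
    using DERIV_local_max[OF _ \<open>m > 0\<close>] by blast
  then have "a / (a + b) = a' / (a' + b')"
    using pos inj_onD[OF log_inj[of 2]] by (simp add: a_def b_def a'_def b'_def)
  then show ?thesis
    using pos by (simp add: pXY_split[of _ _ _ t] a_def b_def a'_def b'_def field_simps)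
qed simp

lemma cond_indep_at_of_cond_prob_eq:
  assumes cond_prob: "\<And>x x'. Q $ (s, x, y) * pXY Q x' y = Q $ (s, x', y) * pXY Q x y"
  shows "Q $ (t, x, y) * pY Q y = pYT Q y t * pXY Q x y"
proof -
  have s_case: "Q $ (s, x, y) * pY Q y = pYT Q y s * pXY Q x y"
  proof -
    have "Q $ (s, x, y) * pY Q y = (\<Sum>x'\<in>UNIV. Q $ (s, x', y) * pXY Q x y)"
      unfolding pY_eq_sum_pXY sum_distrib_left by (rule sum.cong[OF refl cond_prob])
    also have "\<dots> = pYT Q y s * pXY Q x y"
      unfolding pYT_def by (simp add: sum_distrib_right)
    finally show ?thesis .
  qed
  show ?thesis
  proof (cases "t = s")
    case False
    then have "t = (\<not> s)"
      by auto
    with s_case show ?thesis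
      using pXY_split[of Q x y s] pY_split[of Q y s] by (simp add: algebra_simps)
  qed (use s_case in simp)
qed

lemma mem_supp_X_iff: "pT P t > 0 \<Longrightarrow> x \<in> supp_X P t \<longleftrightarrow> pXT P x t > 0"
  by (simp add: supp_X_def zero_less_divide_iff)

lemma mem_supp_Y_iff: "pT P t > 0 \<Longrightarrow> y \<in> supp_Y P t \<longleftrightarrow> pYT P y t > 0"
  by (simp add: supp_Y_def zero_less_divide_iff)

lemma maximizer_indep_T_X_given_Y:
  assumes P: "is_dist P" and pos: "\<And>t. pT P t > 0"
    and Q: "Q \<in> rel_interior (Delta_P P)"
    and max: "\<forall>Q'\<in>Delta_P P. cond_entropy_T_XY Q' \<le> cond_entropy_T_XY Q"
    and supp_X: "supp_X P False = supp_X P True" and supp_Y: "supp_Y P False \<noteq> supp_Y P True"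
  shows "indep_T_X_given_Y Q"
proof -
  have QD: "Q \<in> Delta_P P"
    using Q rel_interior_subset by blast
  have Q_pos: "Q $ (t, u, v) > 0" if "pXT P u t > 0" "pYT P v t > 0" for t u v
    using rel_interior_Delta_P_pos[OF P pos Q that] .
  have X_common: "pXT P u t > 0 \<longleftrightarrow> pXT P u s > 0" for u s t
    using supp_X by (cases s; cases t) (auto simp: set_eq_iff mem_supp_X_iff[OF pos])
  obtain y0 where "(pYT P y0 False > 0) \<noteq> (pYT P y0 True > 0)"
    using supp_Y by (auto simp: set_eq_iff mem_supp_Y_iff[OF pos])
  then obtain t0 where y0: "pYT P y0 t0 > 0" "pYT P y0 (\<not> t0) = 0"
    using pYT_nonneg[OF P, of y0 True] pYT_nonneg[OF P, of y0 False]
    by (cases "pYT P y0 True > 0") (metis (full_types) order_less_le)+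
  have cond_prob: "Q $ (t0, x, y) * pXY Q x' y = Q $ (t0, x', y) * pXY Q x y"
    if y: "\<And>t. pYT P y t > 0" for x x' y
  proof (cases "pXT P x t0 > 0 \<and> pXT P x' t0 > 0")
    case True
    then have "pXT P x t > 0" "pXT P x' t > 0" for t
      using X_common by blast+
    with y y0 show ?thesis
      by (intro maximizer_cond_prob_eq[OF QD max, where y' = y0]) (simp_all add: Q_pos Delta_P_zero_if_pYT_zero[OF QD])
  next
    case False
    have vanish: "Q $ (t0, u, y) = 0 \<and> pXY Q u y = 0" if "\<not> pXT P u t0 > 0" for u
    proof -
      have "pXT P u t = 0" for t
        using that X_common[of u t t0] pXT_nonneg[OF P, of u t] by linarith
      then show ?thesis
        using Delta_P_zero_if_pXT_zero[OF QD] pXY_split[of Q u y t0] by simp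
    qed
    from False show ?thesis
      using vanish[of x] vanish[of x'] by auto
  qed
  show ?thesis
    unfolding indep_T_X_given_Y_def
  proof (intro allI)
    fix t x y
    show "Q $ (t, x, y) * pY Q y = pYT Q y t * pXY Q x y"
    proof (cases "\<forall>s. pYT P y s > 0")
      case True
      then show ?thesis
        by (intro cond_indep_at_of_cond_prob_eq[where s = t0] cond_prob) blast
    next
      case False
      then obtain s where "\<not> pYT P y s > 0"
        by blast
      then have "pYT P y s = 0"
        using pYT_nonneg[OF P, of y s] by linarith
      then have "Q $ (s, u, y) = 0" for u
        using Delta_P_zero_if_pYT_zero[OF QD] by blast
      then show ?thesis
        by (intro cond_indep_at_of_cond_prob_eq[where s = s]) simp
    qed
  qed
qed

definition swap_XY :: "('x::finite, 'y::finite) jdist \<Rightarrow> ('y, 'x) jdist" where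
  "swap_XY Q = vec_lambda (\<lambda>(t, y, x). Q $ (t, x, y))"

lemma swap_XY_nth [simp]: "swap_XY Q $ (t, y, x) = Q $ (t, x, y)"
  by (simp add: swap_XY_def)

lemma swap_XY_swap_XY [simp]: "swap_XY (swap_XY Q) = Q"
  by (simp add: vec_eq_iff)

lemma bounded_linear_swap_XY: "bounded_linear swap_XY"
  unfolding linear_conv_bounded_linear[symmetric] by (rule linearI) (simp_all add: vec_eq_iff)

lemma inj_swap_XY: "inj swap_XY"
  by (metis injI swap_XY_swap_XY)

lemma pXT_swap_XY [simp]: "pXT (swap_XY Q) y t = pYT Q y t"
  by (simp add: pXT_def pYT_def)

lemma pYT_swap_XY [simp]: "pYT (swap_XY Q) x t = pXT Q x t"
  by (simp add: pXT_def pYT_def)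

lemma pXY_swap_XY [simp]: "pXY (swap_XY Q) y x = pXY Q x y"
  by (simp add: pXY_def)

lemma pY_swap_XY [simp]: "pY (swap_XY Q) x = pX Q x"
  by (simp add: pY_def pX_def)

lemma pT_swap_XY [simp]: "pT (swap_XY Q) t = pT Q t"
  using sum_pXT[of "swap_XY Q" t] sum_pYT[of Q t] by simp

lemma is_dist_swap_XY [simp]: "is_dist (swap_XY Q) \<longleftrightarrow> is_dist Q"
proof -
  have "(\<Sum>i\<in>UNIV. swap_XY Q $ i) = (\<Sum>i\<in>UNIV. Q $ i)"
    by (simp add: sum_eq_sum_pXT sum_pXT sum_pYT)
  moreover have "(\<forall>i. 0 \<le> swap_XY Q $ i) \<longleftrightarrow> (\<forall>i. 0 \<le> Q $ i)"
    by (metis prod_cases3 swap_XY_nth)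
  ultimately show ?thesis
    unfolding is_dist_def by simp
qed

lemma supp_X_swap_XY [simp]: "supp_X (swap_XY P) = supp_Y P"
  by (rule ext) (simp add: supp_X_def supp_Y_def)

lemma supp_Y_swap_XY [simp]: "supp_Y (swap_XY P) = supp_X P"
  by (rule ext) (simp add: supp_X_def supp_Y_def)

lemma swap_XY_mem_Delta_P_iff [simp]: "swap_XY Q \<in> Delta_P (swap_XY P) \<longleftrightarrow> Q \<in> Delta_P P"
  by (auto simp: Delta_P_def)

lemma Delta_P_swap_XY: "Delta_P (swap_XY P) = swap_XY ` Delta_P P"
proof
  show "Delta_P (swap_XY P) \<subseteq> swap_XY ` Delta_P P"
  proof
    fix Q
    assume "Q \<in> Delta_P (swap_XY P)"
    then have "swap_XY Q \<in> Delta_P P"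
      using swap_XY_mem_Delta_P_iff[of "swap_XY Q" P] by simp
    then show "Q \<in> swap_XY ` Delta_P P"
      by (metis image_eqI swap_XY_swap_XY)
  qed
qed auto

lemma cond_entropy_swap_XY [simp]: "cond_entropy_T_XY (swap_XY Q) = cond_entropy_T_XY Q"
  unfolding cond_entropy_eq_sum_cell_entropy[where t = True] swap_XY_nth by (rule sum.swap)

lemma indep_T_X_given_Y_swap_XY [simp]: "indep_T_X_given_Y (swap_XY Q) \<longleftrightarrow> indep_T_Y_given_X Q"
  unfolding indep_T_X_given_Y_def indep_T_Y_given_X_def by auto

lemma rel_interior_Delta_P_swap_XY:
  "rel_interior (Delta_P (swap_XY P)) = swap_XY ` rel_interior (Delta_P P)"
  unfolding Delta_P_swap_XY by (rule rel_interior_injective_linear_image[OF bounded_linear_swap_XY inj_swap_XY])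

lemma maximizer_indep_T_Y_given_X:
  assumes P: "is_dist P" and pos: "\<And>t. pT P t > 0"
    and Q: "Q \<in> rel_interior (Delta_P P)"
    and max: "\<forall>Q'\<in>Delta_P P. cond_entropy_T_XY Q' \<le> cond_entropy_T_XY Q"
    and supp_Y: "supp_Y P False = supp_Y P True" and supp_X: "supp_X P False \<noteq> supp_X P True"
  shows "indep_T_Y_given_X Q"
proof -
  have "indep_T_X_given_Y (swap_XY Q)"
  proof (rule maximizer_indep_T_X_given_Y)
    show "swap_XY Q \<in> rel_interior (Delta_P (swap_XY P))"
      using Q unfolding rel_interior_Delta_P_swap_XY by (rule imageI)
    show "\<forall>Q'\<in>Delta_P (swap_XY P). cond_entropy_T_XY Q' \<le> cond_entropy_T_XY (swap_XY Q)"
      using max by (simp add: Delta_P_swap_XY)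
  qed (use P pos supp_X supp_Y in simp_all)
  then show ?thesis
    by simp
qed

theorem mainTheorem15:
  fixes P Qs :: "('x::finite, 'y::finite) jdist"
  assumes "is_dist P"
    and "pT P False > 0" and "pT P True > 0"
    and "Qs \<in> Delta_P P"
    and "\<forall>Q\<in>Delta_P P. cond_entropy_T_XY Q \<le> cond_entropy_T_XY Qs"
    and "Qs \<in> rel_interior (Delta_P P)"
  shows "(supp_X P False = supp_X P True \<and> supp_Y P False \<noteq> supp_Y P True
            \<longrightarrow> indep_T_X_given_Y Qs)
       \<and> (supp_Y P False = supp_Y P True \<and> supp_X P False \<noteq> supp_X P True
            \<longrightarrow> indep_T_Y_given_X Qs)"
proof -
  have pos: "pT P t > 0" for t
    using assms(2,3) by (cases t) simp_all
  show ?thesis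
    using maximizer_indep_T_X_given_Y[OF assms(1) pos assms(6,5)]
      maximizer_indep_T_Y_given_X[OF assms(1) pos assms(6,5)] by iprover
qed

end
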